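(* Let $d,e\in\mathbb{N}$ and set $n=2$, $m=d+2$. Assume that the Padé matrix $P_T$ of $\mathcal{T}^2_{d,e,d+2}$ is square, i.e. $\binom{e+2}{2}=\binom{d+4}{2}-\binom{d+2}{2}=2d+5$. Let $f=\det(P_T)\in\mathbb{C}[c_\gamma : 0\le|\gamma|\le d+2]$. If $\mathcal{T}^2_{d,e,d+2}=V(f)$ and $\mathcal{T}^2_{d,e,d+2}$ is a non-defective hypersurface of $\mathbb{P}^N$, $N=\binom{d+4}{2}-1$, then the Hessian of $f$ vanishes identically: $h_f=\det\left(\frac{\partial^2 f}{\partial c_\gamma\,\partial c_\delta}\right)_{0\le|\gamma|,|\delta|\le d+2}\equiv 0$.
   Context: Notation: $x=(x_1,\dots,x_n)$, multi-indices $\gamma\in\mathbb{N}^n$, $x^\gamma=x_1^{\gamma_1}\cdots x_n^{\gamma_n}$, $|\gamma|=\gamma_1+\dots+\gamma_n$. Taylor variety: for $P,Q\in\mathbb{C}[x]$ with $P(0)=Q(0)=1$, $\deg P\le d$, $\deg Q\le e$, write the Taylor expansion at the origin $P/Q=1+\sum_{0<|\gamma|\le m}c_\gamma x^\gamma+(\text{terms of order}\ge m+1)$. This defines a map $\psi:\mathbb{C}^{\binom{d+n}{n}-1}\times\mathbb{C}^{\binom{e+n}{n}-1}\to\mathbb{C}^{\binom{n+m}{n}-1}$, $(P,Q)\mapsto(c_\gamma)_{0<|\gamma|\le m}$. The Taylor variety $\mathcal{T}^n_{d,e,m}$ is the projective closure of the image of $\psi$ in $\mathbb{P}^N$, $N=\binom{n+m}{n}-1$,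 with homogeneous coordinates $[c_\gamma]_{0\le|\gamma|\le m}$ (it is irreducible). Its expected dimension is $\min\{\binom{d+n}{n}+\binom{e+n}{n}-2,\binom{m+n}{n}-1\}$; it is non-defective if its dimension equals the expected dimension. Padé matrix: for the generic polynomial $T=\sum_{0\le|\gamma|\le m}c_\gamma x^\gamma$, let $\varphi_T:\mathbb{C}[x]_{\le e}\to\operatorname{Span}\{x^\rho: d+1\le|\rho|\le m\}$ send $Q$ to the part of $QT$ supported on monomials of degree between $d+1$ and $m$. The Padé matrix $P_T$ is the matrix of $\varphi_T$ in monomial bases (columns indexed by monomials $x^\sigma$, $|\sigma|\le e$, rows by monomials $x^\rho$, $d+1\le|\rho|\le m$); its $(\rho,\sigma)$ entry is $c_{\rho-\sigma}$ if $\sigma\le\rho$ componentwise and $0$ otherwise. It has size $\left(\binom{m+n}{n}-\binom{d+n}{n}\right)\times\binom{e+n}{n}$, with entries linear forms in the $c_\gamma$. *)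

theory Defs
  imports "HOL-Analysis.Derivative" "Jordan_Normal_Form.Determinant"
begin

text \<open>A point of C^{Gamma} (coordinates c_gamma) is a
  function nat*nat => complex which vanishes outside the index set Gamma.\<close>

type_synonym mon = "nat \<times> nat"
type_synonym pt = "mon \<Rightarrow> complex"

definition mdeg :: "mon \<Rightarrow> nat" where
  "mdeg g = fst g + snd g"

definition mle :: "mon \<Rightarrow> mon \<Rightarrow> bool" where
  "mle s r \<longleftrightarrow> fst s \<le> fst r \<and> snd s \<le> snd r"

definition msub :: "mon \<Rightarrow> mon \<Rightarrow> mon" where
  "msub r s = (fst r - fst s, snd r - snd s)"

text \<open>Monomials of exact degree k, and of degree in [a, b], as explicit lists
  (fixing an ordering of the monomial bases).\<close>
definition mons_deg :: "nat \<Rightarrow> mon list" where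
  "mons_deg k = map (\<lambda>i. (i, k - i)) [0..<Suc k]"

definition mons_between :: "nat \<Rightarrow> nat \<Rightarrow> mon list" where
  "mons_between a b = concat (map mons_deg [a..<Suc b])"

definition mons_upto :: "nat \<Rightarrow> mon set" where
  "mons_upto m = {g. mdeg g \<le> m}"

definition ext_pts :: "mon set \<Rightarrow> pt set" where
  "ext_pts G = {x. \<forall>g. g \<notin> G \<longrightarrow> x g = 0}"

inductive_set polyfun :: "mon set \<Rightarrow> (pt \<Rightarrow> complex) set" for G where
  pconst: "(\<lambda>x. a) \<in> polyfun G"
| pvar: "g \<in> G \<Longrightarrow> (\<lambda>x. x g) \<in> polyfun G"
| padd: "p \<in> polyfun G \<Longrightarrow> q \<in> polyfun G \<Longrightarrow> (\<lambda>x. p x + q x) \<in> polyfun G"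
| pmult: "p \<in> polyfun G \<Longrightarrow> q \<in> polyfun G \<Longrightarrow> (\<lambda>x. p x * q x) \<in> polyfun G"

definition zariski_closed :: "mon set \<Rightarrow> pt set \<Rightarrow> bool" where
  "zariski_closed G X \<longleftrightarrow>
     (\<exists>P \<subseteq> polyfun G. X = {x \<in> ext_pts G. \<forall>p\<in>P. p x = 0})"

definition zariski_closure :: "mon set \<Rightarrow> pt set \<Rightarrow> pt set" where
  "zariski_closure G S =
     {x \<in> ext_pts G. \<forall>p \<in> polyfun G. (\<forall>y\<in>S. p y = 0) \<longrightarrow> p x = 0}"

definition zariski_irreducible :: "mon set \<Rightarrow> pt set \<Rightarrow> bool" where
  "zariski_irreducible G X \<longleftrightarrow> zariski_closed G X \<and> X \<noteq> {} \<and>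
     (\<forall>Y Z. zariski_closed G Y \<longrightarrow> zariski_closed G Z \<longrightarrow> X \<subseteq> Y \<union> Z \<longrightarrow> X \<subseteq> Y \<or> X \<subseteq> Z)"

definition krull_dim :: "mon set \<Rightarrow> pt set \<Rightarrow> nat" where
  "krull_dim G X = Sup {k. \<exists>Z :: nat \<Rightarrow> pt set.
      (\<forall>i\<le>k. zariski_irreducible G (Z i) \<and> Z i \<subseteq> X) \<and> (\<forall>i<k. Z i \<subset> Z (Suc i))}"

text \<open>Image of the Taylor map psi, embedded in the affine chart c_0 = 1 of P^N.
  p, q are the coefficient vectors of P, Q (deg P <= d, deg Q <= e, P(0)=Q(0)=1);
  c are the Taylor coefficients of P/Q up to order m, characterised by
  Q * (P/Q) = P up to order m, i.e. sum_{sigma <= gamma} q_sigma c_{gamma - sigma} = p_gamma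
  for |gamma| <= m (this determines c uniquely since q_0 = 1; c_0 = 1).\<close>
definition taylor_image :: "nat \<Rightarrow> nat \<Rightarrow> nat \<Rightarrow> pt set" where
  "taylor_image d e m = {c \<in> ext_pts (mons_upto m). \<exists>p q :: pt.
      p (0,0) = 1 \<and> q (0,0) = 1 \<and>
      (\<forall>g. d < mdeg g \<longrightarrow> p g = 0) \<and> (\<forall>g. e < mdeg g \<longrightarrow> q g = 0) \<and>
      (\<forall>g. mdeg g \<le> m \<longrightarrow>
         (\<Sum>s\<in>{s. mle s g}. q s * c (msub g s)) = p g)}"

text \<open>Affine cone over the Taylor variety T^2_{d,e,m} in C^{N+1}: the Zariski closure
  of the cone over the image of psi. Projective closure in P^N corresponds to this cone
  (a point [c] lies in T iff c lies in this cone).\<close>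
definition taylor_cone :: "nat \<Rightarrow> nat \<Rightarrow> nat \<Rightarrow> pt set" where
  "taylor_cone d e m = zariski_closure (mons_upto m)
      {(\<lambda>g. t * c g) | t c. c \<in> taylor_image d e m}"

text \<open>Dimension of the projective variety T = (dimension of its affine cone) - 1.\<close>
definition taylor_dim :: "nat \<Rightarrow> nat \<Rightarrow> nat \<Rightarrow> nat" where
  "taylor_dim d e m = krull_dim (mons_upto m) (taylor_cone d e m) - 1"

definition expected_dim :: "nat \<Rightarrow> nat \<Rightarrow> nat \<Rightarrow> nat \<Rightarrow> nat" where
  "expected_dim n d e m = min ((d + n choose n) + (e + n choose n) - 2) ((m + n choose n) - 1)"

definition pade_matrix :: "nat \<Rightarrow> nat \<Rightarrow> nat \<Rightarrow> pt \<Rightarrow> complex mat" where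
  "pade_matrix d e m c =
     (let R = mons_between (Suc d) m; C = mons_between 0 e in
      mat (length R) (length C)
        (\<lambda>(i, j). if mle (C ! j) (R ! i) then c (msub (R ! i) (C ! j)) else 0))"

definition pade_det :: "nat \<Rightarrow> nat \<Rightarrow> nat \<Rightarrow> pt \<Rightarrow> complex" where
  "pade_det d e m c = det (pade_matrix d e m c)"

definition pderiv_coord :: "mon \<Rightarrow> (pt \<Rightarrow> complex) \<Rightarrow> pt \<Rightarrow> complex" where
  "pderiv_coord g F c = deriv (\<lambda>t. F (c(g := t))) (c g)"

definition hessian_det :: "nat \<Rightarrow> (pt \<Rightarrow> complex) \<Rightarrow> pt \<Rightarrow> complex" where
  "hessian_det m F c =
     (let V = mons_between 0 m in
      det (mat (length V) (length V)
        (\<lambda>(i, j). pderiv_coord (V ! i) (pderiv_coord (V ! j) F) c)))"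

end

theory Submission
  imports Defs
begin

text \<open>Squareness of the Pade matrix forces e \<le> d. Then every entry c_{\<rho>-\<sigma>} of
  P_T has |\<rho>-\<sigma>| \<ge> d + 1 - e > 0, so f = det P_T does not involve the variable c_0
  at all, and the row of the Hessian belonging to c_0 vanishes.\<close>

lemma choose_2_add_2_diff: "(n + 4 choose 2) - (n + 2 choose 2) = 2 * n + 5"
  by (simp add: choose_two algebra_simps)

lemma square_pade_matrix_imp_le:
  fixes d e :: nat
  assumes "(e + 2 choose 2) = (d + 4 choose 2) - (d + 2 choose 2)"
  shows "e \<le> d"
proof (rule ccontr)
  have "(e + 2) * (e + 1) = 2 * (e + 2 choose 2)"
    using binomial_absorption[of 1 "e + 1"] by (simp add: numeral_2_eq_2)
  also have "\<dots> = 2 * (2 * d + 5)"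
    by (simp only: assms choose_2_add_2_diff)
  finally have eq: "(e + 2) * (e + 1) = 4 * d + 10"
    by simp
  assume "\<not> e \<le> d"
  with eq have "e * e \<le> e + 4"
    by (simp add: algebra_simps)
  then have "e \<le> 2"
    using mult_le_mono1[of 3 e e] by linarith
  then have "e = 0 \<or> e = 1 \<or> e = 2"
    by auto
  with eq show False
    by auto
qed

lemma set_mons_between: "set (mons_between a b) = {g. a \<le> mdeg g \<and> mdeg g \<le> b}"
  by (force simp: mons_between_def mons_deg_def mdeg_def image_iff)

lemma det_eq_0_if_zero_row:
  fixes A :: "'a :: comm_ring_1 mat"
  assumes A: "A \<in> carrier_mat n n" and k: "k < n"
    and zero: "\<And>j. j < n \<Longrightarrow> A $$ (k, j) = 0"
  shows "det A = 0"
proof -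
  have "A = mat\<^sub>r n n (\<lambda>i. if i = k then 0\<^sub>v n else row A i)"
    using A zero by (intro eq_matI) auto
  also have "det \<dots> = 0"
    using A k by (intro det_row_0) auto
  finally show ?thesis .
qed

definition indep_coord :: "mon \<Rightarrow> (pt \<Rightarrow> complex) \<Rightarrow> bool" where
  "indep_coord g F \<longleftrightarrow> (\<forall>x t. F (x(g := t)) = F x)"

lemma pderiv_coord_eq_0_if_indep_coord:
  assumes "indep_coord g F"
  shows "pderiv_coord g F c = 0"
proof -
  have "(\<lambda>t. F (c(g := t))) = (\<lambda>t. F c)"
    using assms by (auto simp: indep_coord_def)
  then show ?thesis
    by (simp add: pderiv_coord_def)
qed

lemma indep_coord_pderiv_coord:
  assumes F: "indep_coord g F"
  shows "indep_coord g (pderiv_coord h F)"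
  unfolding indep_coord_def
proof (intro allI)
  fix x :: pt and t
  show "pderiv_coord h F (x(g := t)) = pderiv_coord h F x"
  proof (cases "h = g")
    case True
    then show ?thesis
      using pderiv_coord_eq_0_if_indep_coord[OF F] by simp
  next
    case False
    then have "(x(g := t))(h := s) = (x(h := s))(g := t)" for s
      by (auto simp: fun_upd_twist)
    then have "(\<lambda>s. F ((x(g := t))(h := s))) = (\<lambda>s. F (x(h := s)))"
      using F by (simp add: indep_coord_def)
    with False show ?thesis
      by (simp add: pderiv_coord_def)
  qed
qed

lemma hessian_det_eq_0_if_indep_coord:
  assumes F: "indep_coord g F" and "mdeg g \<le> m"
  shows "hessian_det m F c = 0"
proof -
  define V where "V = mons_between 0 m"
  have "g \<in> set V"
    using assms(2) by (simp add: V_def set_mons_between)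
  then obtain k where k: "k < length V" "V ! k = g"
    by (auto simp: in_set_conv_nth)
  have "pderiv_coord g (pderiv_coord (V ! j) F) c = 0" for j
    using F by (intro pderiv_coord_eq_0_if_indep_coord indep_coord_pderiv_coord)
  with k show ?thesis
    unfolding hessian_det_def Let_def V_def[symmetric]
    by (intro det_eq_0_if_zero_row[where k = k]) auto
qed

lemma pade_matrix_upd_0:
  assumes "e \<le> d"
  shows "pade_matrix d e m (c((0, 0) := t)) = pade_matrix d e m c"
proof -
  define R where "R = mons_between (Suc d) m"
  define C where "C = mons_between 0 e"
  have "msub \<rho> \<sigma> \<noteq> (0, 0)" if "\<rho> \<in> set R" "\<sigma> \<in> set C" "mle \<sigma> \<rho>" for \<rho> \<sigma>
  proof
    assume "msub \<rho> \<sigma> = (0, 0)"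
    with \<open>mle \<sigma> \<rho>\<close> have "\<rho> = \<sigma>"
      by (auto simp: msub_def mle_def prod_eq_iff)
    moreover have "Suc d \<le> mdeg \<rho>" "mdeg \<sigma> \<le> e"
      using that by (auto simp: R_def C_def set_mons_between)
    ultimately show False
      using assms by simp
  qed
  then show ?thesis
    unfolding pade_matrix_def Let_def R_def[symmetric] C_def[symmetric]
    by (intro eq_matI) auto
qed

lemma indep_coord_pade_det:
  assumes "e \<le> d"
  shows "indep_coord (0, 0) (pade_det d e m)"
  using pade_matrix_upd_0[OF assms] by (simp add: indep_coord_def pade_det_def)

theorem theorem1p1:
  fixes d e :: nat
  assumes square: "(e + 2 choose 2) = (d + 4 choose 2) - (d + 2 choose 2)"
    and TVf: "taylor_cone d e (d + 2) =
              {x \<in> ext_pts (mons_upto (d + 2)). pade_det d e (d + 2) x = 0}"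
    and nondefective: "taylor_dim d e (d + 2) = expected_dim 2 d e (d + 2)"
    and hypersurface: "taylor_dim d e (d + 2) = (d + 4 choose 2) - 1 - 1"
  shows "\<forall>c. hessian_det (d + 2) (pade_det d e (d + 2)) c = 0"
proof
  fix c
  have "indep_coord (0, 0) (pade_det d e (d + 2))"
    using square_pade_matrix_imp_le[OF square] by (rule indep_coord_pade_det)
  then show "hessian_det (d + 2) (pade_det d e (d + 2)) c = 0"
    by (rule hessian_det_eq_0_if_indep_coord) (simp add: mdeg_def)
qed

end
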